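(* Let $D$ be a connected locally semicomplete digraph in which no inclusion-wise maximal weak hub is mixed. If $X$ and $Y$ are two distinct inclusion-wise maximal weak hubs of $D$, then $X\cap Y=\emptyset$.
   Context: Digraphs are finite, no loops, no parallel arcs; digons allowed. $x^+$, $x^-$ are out- and in-neighbourhoods. A digraph is semicomplete if any two distinct vertices are joined by at least one arc; locally semicomplete if every $x^+$ and every $x^-$ induces a semicomplete digraph. A weak hub is a set $X\subseteq V(D)$ with $D[X]$ strongly connected such that some vertex $x$ satisfies $X\subseteq x^-\setminus x^+$ or $X\subseteq x^+\setminus x^-$. A weak hub $X$ is mixed if there exist $x\notin X$ and $u,v\in X$ such that $xu$ and $vx$ are arcs. *)

theory Defs
  imports Main
begin

text \<open>A digraph is given by a finite vertex set V and an arc relation A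
 (A x y means the arc xy).
 Digons (A x y and A y x) are allowed; parallel arcs are excluded by using a relation.\<close>

definition digraph :: "'a set \<Rightarrow> ('a \<Rightarrow> 'a \<Rightarrow> bool) \<Rightarrow> bool" where
  "digraph V A \<longleftrightarrow> finite V \<and> (\<forall>x y. A x y \<longrightarrow> x \<in> V \<and> y \<in> V) \<and> (\<forall>x. \<not> A x x)"

definition out_nbhd :: "'a set \<Rightarrow> ('a \<Rightarrow> 'a \<Rightarrow> bool) \<Rightarrow> 'a \<Rightarrow> 'a set" where
  "out_nbhd V A x = {y \<in> V. A x y}"

definition in_nbhd :: "'a set \<Rightarrow> ('a \<Rightarrow> 'a \<Rightarrow> bool) \<Rightarrow> 'a \<Rightarrow> 'a set" where
  "in_nbhd V A x = {y \<in> V. A y x}"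

definition semicomplete_on :: "('a \<Rightarrow> 'a \<Rightarrow> bool) \<Rightarrow> 'a set \<Rightarrow> bool" where
  "semicomplete_on A S \<longleftrightarrow> (\<forall>x\<in>S. \<forall>y\<in>S. x \<noteq> y \<longrightarrow> A x y \<or> A y x)"

definition locally_semicomplete :: "'a set \<Rightarrow> ('a \<Rightarrow> 'a \<Rightarrow> bool) \<Rightarrow> bool" where
  "locally_semicomplete V A \<longleftrightarrow> digraph V A \<and>
     (\<forall>x\<in>V. semicomplete_on A (out_nbhd V A x) \<and> semicomplete_on A (in_nbhd V A x))"

definition induced_arcs :: "('a \<Rightarrow> 'a \<Rightarrow> bool) \<Rightarrow> 'a set \<Rightarrow> 'a \<Rightarrow> 'a \<Rightarrow> bool" where
  "induced_arcs A S x y \<longleftrightarrow> x \<in> S \<and> y \<in> S \<and> A x y"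

definition strongly_connected_on :: "('a \<Rightarrow> 'a \<Rightarrow> bool) \<Rightarrow> 'a set \<Rightarrow> bool" where
  "strongly_connected_on A S \<longleftrightarrow> S \<noteq> {} \<and>
     (\<forall>u\<in>S. \<forall>v\<in>S. (induced_arcs A S)\<^sup>*\<^sup>* u v)"

definition connected_digraph :: "'a set \<Rightarrow> ('a \<Rightarrow> 'a \<Rightarrow> bool) \<Rightarrow> bool" where
  "connected_digraph V A \<longleftrightarrow> V \<noteq> {} \<and>
     (\<forall>u\<in>V. \<forall>v\<in>V. (\<lambda>x y. A x y \<or> A y x)\<^sup>*\<^sup>* u v)"

definition weak_hub :: "'a set \<Rightarrow> ('a \<Rightarrow> 'a \<Rightarrow> bool) \<Rightarrow> 'a set \<Rightarrow> bool" where
  "weak_hub V A X \<longleftrightarrow> X \<subseteq> V \<and> strongly_connected_on A X \<and>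
     (\<exists>x\<in>V. X \<subseteq> in_nbhd V A x - out_nbhd V A x \<or> X \<subseteq> out_nbhd V A x - in_nbhd V A x)"

definition maximal_weak_hub :: "'a set \<Rightarrow> ('a \<Rightarrow> 'a \<Rightarrow> bool) \<Rightarrow> 'a set \<Rightarrow> bool" where
  "maximal_weak_hub V A X \<longleftrightarrow> weak_hub V A X \<and>
     (\<forall>Y. weak_hub V A Y \<and> X \<subseteq> Y \<longrightarrow> Y = X)"

definition mixed_hub :: "'a set \<Rightarrow> ('a \<Rightarrow> 'a \<Rightarrow> bool) \<Rightarrow> 'a set \<Rightarrow> bool" where
  "mixed_hub V A X \<longleftrightarrow> (\<exists>x\<in>V - X. \<exists>u\<in>X. \<exists>v\<in>X. A x u \<and> A v x)"

end

theory Submission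
  imports Defs
begin

text \<open>Suppose the maximal weak hubs \<open>X \<noteq> Y\<close> share a vertex \<open>v\<close>, and let \<open>x\<close>, \<open>y\<close> be
  vertices witnessing that \<open>X\<close>, \<open>Y\<close> are weak hubs. If a neighbour \<open>z\<close> of \<open>v\<close> lay outside
  \<open>X \<union> Y\<close>, then, as neither hub is mixed, local semicompleteness propagates the arc between
  \<open>v\<close> and \<open>z\<close> along walks in \<open>X\<close> and in \<open>Y\<close>, so \<open>z\<close> would witness that \<open>X \<union> Y\<close> is a weak
  hub, contradicting maximality. Hence \<open>x \<in> Y\<close> and \<open>y \<in> X\<close>. If both hubs point the same way
  towards their witnesses this contradicts the orientation of the arc between \<open>x\<close> and \<open>y\<close>;
  otherwise, say \<open>y\<close> dominates \<open>Y\<close>, a walk in \<open>Y\<close> from \<open>x\<close> back to \<open>v\<close> leaves \<open>Y - X\<close> at some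
  \<open>w\<close>, and \<open>y \<rightarrow> w \<rightarrow> X\<close> makes \<open>X\<close> mixed.\<close>

lemma rtranclp_enters_set:
  assumes "r\<^sup>*\<^sup>* a b" "a \<notin> X" "b \<in> X"
  shows "\<exists>w u. r w u \<and> w \<notin> X \<and> u \<in> X"
  using assms by (induction rule: rtranclp_induct) auto

lemma induced_arcs_mono: "X \<subseteq> Z \<Longrightarrow> induced_arcs A X \<le> induced_arcs A Z"
  by (auto simp: induced_arcs_def)

lemma strongly_connected_on_Un:
  assumes "strongly_connected_on A X" "strongly_connected_on A Y" "v \<in> X" "v \<in> Y"
  shows "strongly_connected_on A (X \<union> Y)"
proof -
  have walk_in_Un: "(induced_arcs A (X \<union> Y))\<^sup>*\<^sup>* a b" if "(induced_arcs A S)\<^sup>*\<^sup>* a b" "S \<subseteq> X \<union> Y"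
    for S a b using rtranclp_mono[OF induced_arcs_mono[OF that(2)]] that(1) by blast
  have "(induced_arcs A (X \<union> Y))\<^sup>*\<^sup>* a v" "(induced_arcs A (X \<union> Y))\<^sup>*\<^sup>* v b"
    if "a \<in> X \<union> Y" "b \<in> X \<union> Y" for a b
    using that assms walk_in_Un[of X] walk_in_Un[of Y] unfolding strongly_connected_on_def by blast+
  then show ?thesis using assms(3) unfolding strongly_connected_on_def
    by (blast intro: rtranclp_trans)
qed

lemma out_nbhd_conversep [simp]: "out_nbhd V A\<inverse>\<inverse> x = in_nbhd V A x"
  and in_nbhd_conversep [simp]: "in_nbhd V A\<inverse>\<inverse> x = out_nbhd V A x"
  by (auto simp: out_nbhd_def in_nbhd_def)

lemma semicomplete_on_conversep [simp]: "semicomplete_on A\<inverse>\<inverse> S = semicomplete_on A S"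
  by (auto simp: semicomplete_on_def)

lemma locally_semicomplete_conversep [simp]:
  "locally_semicomplete V A\<inverse>\<inverse> = locally_semicomplete V A"
  by (auto simp: locally_semicomplete_def digraph_def)

lemma strongly_connected_on_conversep [simp]:
  "strongly_connected_on A\<inverse>\<inverse> S = strongly_connected_on A S"
proof -
  have "induced_arcs A\<inverse>\<inverse> S = (induced_arcs A S)\<inverse>\<inverse>"
    by (auto simp: induced_arcs_def fun_eq_iff)
  then show ?thesis by (auto simp: strongly_connected_on_def rtranclp_conversep)
qed

lemma weak_hub_conversep [simp]: "weak_hub V A\<inverse>\<inverse> X = weak_hub V A X"
  by (auto simp: weak_hub_def)

lemma maximal_weak_hub_conversep [simp]: "maximal_weak_hub V A\<inverse>\<inverse> X = maximal_weak_hub V A X"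
  by (simp add: maximal_weak_hub_def)

lemma mixed_hub_conversep [simp]: "mixed_hub V A\<inverse>\<inverse> X = mixed_hub V A X"
  by (auto simp: mixed_hub_def)

lemma strongly_connected_dominates_if_one_arc:
  assumes ls: "locally_semicomplete V A" and SV: "S \<subseteq> V" and sc: "strongly_connected_on A S"
    and zV: "z \<in> V" and zS: "z \<notin> S" and no_back: "\<forall>u\<in>S. \<not> A z u"
    and vS: "v \<in> S" and vz: "A v z"
  shows "S \<subseteq> in_nbhd V A z - out_nbhd V A z"
proof -
  have "A w z" if "(induced_arcs A S)\<^sup>*\<^sup>* v w" for w
    using that
  proof (induction rule: rtranclp_induct)
    case base
    show ?case using vz .
  next
    case (step a b)
    then have ab: "a \<in> S" "b \<in> S" "A a b" by (auto simp: induced_arcs_def)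
    have "semicomplete_on A (out_nbhd V A a)" using ls ab SV by (auto simp: locally_semicomplete_def)
    moreover have "b \<in> out_nbhd V A a" "z \<in> out_nbhd V A a" "b \<noteq> z"
      using ab SV zV zS step.IH by (auto simp: out_nbhd_def)
    ultimately have "A b z \<or> A z b" unfolding semicomplete_on_def by blast
    then show ?case using no_back ab by auto
  qed
  then show ?thesis using sc vS SV no_back by (auto simp: strongly_connected_on_def in_nbhd_def out_nbhd_def)
qed

lemma weak_hub_Un_if_out_nbr_outside:
  assumes ls: "locally_semicomplete V A"
    and hX: "weak_hub V A X" and hY: "weak_hub V A Y"
    and nmX: "\<not> mixed_hub V A X" and nmY: "\<not> mixed_hub V A Y"
    and vX: "v \<in> X" and vY: "v \<in> Y" and zV: "z \<in> V" and zXY: "z \<notin> X \<union> Y" and vz: "A v z"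
  shows "weak_hub V A (X \<union> Y)"
proof -
  have XV: "X \<subseteq> V" and YV: "Y \<subseteq> V"
    and scX: "strongly_connected_on A X" and scY: "strongly_connected_on A Y"
    using hX hY by (auto simp: weak_hub_def)
  have "\<forall>u\<in>X. \<not> A z u" "\<forall>u\<in>Y. \<not> A z u"
    using nmX nmY vz zV zXY vX vY unfolding mixed_hub_def by blast+
  then have "X \<subseteq> in_nbhd V A z - out_nbhd V A z" "Y \<subseteq> in_nbhd V A z - out_nbhd V A z"
    using strongly_connected_dominates_if_one_arc[OF ls XV scX zV _ _ vX vz]
      strongly_connected_dominates_if_one_arc[OF ls YV scY zV _ _ vY vz] zXY by auto
  then show ?thesis
    using XV YV zV strongly_connected_on_Un[OF scX scY vX vY] by (auto simp: weak_hub_def)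
qed

lemma out_nbr_of_common_vertex_in_Un:
  assumes ls: "locally_semicomplete V A"
    and nm: "\<forall>Z. maximal_weak_hub V A Z \<longrightarrow> \<not> mixed_hub V A Z"
    and mX: "maximal_weak_hub V A X" and mY: "maximal_weak_hub V A Y" and ne: "X \<noteq> Y"
    and vX: "v \<in> X" and vY: "v \<in> Y" and zV: "z \<in> V" and vz: "A v z"
  shows "z \<in> X \<union> Y"
proof (rule ccontr)
  assume "z \<notin> X \<union> Y"
  then have "weak_hub V A (X \<union> Y)"
    using weak_hub_Un_if_out_nbr_outside[OF ls _ _ _ _ vX vY zV _ vz] nm mX mY
    by (auto simp: maximal_weak_hub_def)
  then have "X \<union> Y = X" "X \<union> Y = Y" using mX mY unfolding maximal_weak_hub_def by auto
  then show False using ne by auto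
qed

lemma nbr_of_common_vertex_in_Un:
  assumes ls: "locally_semicomplete V A"
    and nm: "\<forall>Z. maximal_weak_hub V A Z \<longrightarrow> \<not> mixed_hub V A Z"
    and mX: "maximal_weak_hub V A X" and mY: "maximal_weak_hub V A Y" and ne: "X \<noteq> Y"
    and vX: "v \<in> X" and vY: "v \<in> Y" and zV: "z \<in> V" and adj: "A v z \<or> A z v"
  shows "z \<in> X \<union> Y"
  using adj out_nbr_of_common_vertex_in_Un[OF ls nm mX mY ne vX vY zV]
    out_nbr_of_common_vertex_in_Un[of V "A\<inverse>\<inverse>", simplified, OF ls nm mX mY ne vX vY zV]
  by blast

lemma weak_hub_centre:
  assumes "digraph V A" "weak_hub V A X"
  obtains x where "x \<in> V" "x \<notin> X" "\<forall>u\<in>X. A u x \<or> A x u"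
    "X \<subseteq> in_nbhd V A x - out_nbhd V A x \<or> X \<subseteq> out_nbhd V A x - in_nbhd V A x"
  using assms by (fastforce simp: weak_hub_def digraph_def in_nbhd_def out_nbhd_def)

lemma mixed_hub_if_centre_inside:
  assumes "strongly_connected_on A Y" "Y \<subseteq> V" "y \<in> X" "Y \<subseteq> out_nbhd V A y"
    "x \<in> Y" "x \<notin> X" "v \<in> X" "v \<in> Y"
  shows "mixed_hub V A X"
proof -
  have "(induced_arcs A Y)\<^sup>*\<^sup>* x v" using assms by (auto simp: strongly_connected_on_def)
  then obtain w u where "induced_arcs A Y w u" "w \<notin> X" "u \<in> X"
    using rtranclp_enters_set assms by metis
  then show ?thesis
    using assms unfolding mixed_hub_def by (force simp: induced_arcs_def out_nbhd_def)
qed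

theorem claim4p4:
  fixes V :: "'a set" and A :: "'a \<Rightarrow> 'a \<Rightarrow> bool" and X Y :: "'a set"
  assumes "locally_semicomplete V A"
    and "connected_digraph V A"
    and "\<forall>Z. maximal_weak_hub V A Z \<longrightarrow> \<not> mixed_hub V A Z"
    and "maximal_weak_hub V A X"
    and "maximal_weak_hub V A Y"
    and "X \<noteq> Y"
  shows "X \<inter> Y = {}"
proof (rule ccontr)
  note ls = assms(1) and nm = assms(3) and mX = assms(4) and mY = assms(5)
  assume "X \<inter> Y \<noteq> {}"
  then obtain v where vX: "v \<in> X" and vY: "v \<in> Y" by blast
  have dg: "digraph V A" using ls by (simp add: locally_semicomplete_def)
  have hX: "weak_hub V A X" and hY: "weak_hub V A Y" using mX mY by (auto simp: maximal_weak_hub_def)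
  obtain x where xV: "x \<in> V" and xX: "x \<notin> X" and vx: "A v x \<or> A x v"
    and x_centre: "X \<subseteq> in_nbhd V A x - out_nbhd V A x \<or> X \<subseteq> out_nbhd V A x - in_nbhd V A x"
    using weak_hub_centre[OF dg hX] vX by metis
  obtain y where yV: "y \<in> V" and yY: "y \<notin> Y" and vy: "A v y \<or> A y v"
    and y_centre: "Y \<subseteq> in_nbhd V A y - out_nbhd V A y \<or> Y \<subseteq> out_nbhd V A y - in_nbhd V A y"
    using weak_hub_centre[OF dg hY] vY by metis
  have xY: "x \<in> Y" and yX: "y \<in> X"
    using nbr_of_common_vertex_in_Un[OF ls nm mX mY assms(6) vX vY] xV xX vx yV yY vy by auto
  have "weak_hub V A Y \<and> Y \<subseteq> out_nbhd V A y \<Longrightarrow> mixed_hub V A X"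
    using mixed_hub_if_centre_inside[OF _ _ yX _ xY xX vX vY] by (auto simp: weak_hub_def)
  moreover have "weak_hub V A X \<and> X \<subseteq> out_nbhd V A x \<Longrightarrow> mixed_hub V A Y"
    using mixed_hub_if_centre_inside[OF _ _ xY _ yX yY vY vX] by (auto simp: weak_hub_def)
  ultimately show False
    using x_centre y_centre xY yX hX hY nm mX mY by (auto simp: in_nbhd_def out_nbhd_def)
qed

end
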